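(* For an integer $m\ge0$ let $\mathbf{S}_m=\{1,\dots,m\}^2$, and let $B_{\mathbf{S}}(m,k)$ be the number of $k$-element subsets of $\mathbf{S}_m$ no two distinct elements $(i,j),(i',j')$ of which satisfy $i-j=i'-j'$ or $i+j=i'+j'$ (nonattacking placements of $k$ bishops). Then for all integers $m,k\ge 0$, $$B_{\mathbf{S}}(m,k)=\sum_{j=0}^{k}\sum_{i=0}^{j}\binom{\lfloor m/2\rfloor}{i}\left\{ {m-i \atop m-j}\right\}\sum_{l=0}^{k-j}\binom{\lceil m/2\rceil}{l}\left\{ {m-l \atop m-k+j}\right\}.$$
   Context: The Stirling numbers of the second kind $\left\{ {n \atop r}\right\}$ are used in the extended sense for all integers $n,r$: for $n,r\ge0$ they are the usual ones; for $n,r\le 0$, $\left\{ {n \atop r}\right\}=\left[{-r \atop -n}\right]$, the unsigned Stirling number of the first kind; and they are $0$ when one of $n,r$ is positive and the other negative (Knuth's extension, satisfying $\left\{ {n \atop r}\right\}=r\left\{ {n-1 \atop r}\right\}+\left\{ {n-1 \atop r-1}\right\}$ for all integers). *)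

theory Defs
  imports Main "HOL-Combinatorics.Stirling"
begin

text \<open>Knuth's extension of the Stirling numbers of the second kind to all integers:
  usual values for n, r \<ge> 0; unsigned first-kind [ -r, -n ] for n, r \<le> 0; 0 otherwise.\<close>
definition Stirling2_ext :: "int \<Rightarrow> int \<Rightarrow> int" where
  "Stirling2_ext n r =
     (if 0 \<le> n \<and> 0 \<le> r then int (Stirling (nat n) (nat r))
      else if n \<le> 0 \<and> r \<le> 0 then int (stirling (nat (- r)) (nat (- n)))
      else 0)"

definition board_S :: "nat \<Rightarrow> (int \<times> int) set" where
  "board_S m = {1..int m} \<times> {1..int m}"

definition nonattacking_bishops :: "(int \<times> int) set \<Rightarrow> bool" where
  "nonattacking_bishops A \<longleftrightarrow>
     (\<forall>p\<in>A. \<forall>q\<in>A. p \<noteq> q \<longrightarrow>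
        fst p - snd p \<noteq> fst q - snd q \<and> fst p + snd p \<noteq> fst q + snd q)"

definition B_S :: "nat \<Rightarrow> nat \<Rightarrow> nat" where
  "B_S m k = card {A. A \<subseteq> board_S m \<and> card A = k \<and> nonattacking_bishops A}"

end

theory Submission
  imports Defs
begin

(* Colour the board by the parity of i + j. Bishops of different colours never attack each
   other, so B_S(m, k) is a convolution of the counts for the two colours. Turning the board
   by 45 degrees, a bishop of colour ev becomes a rook on the board whose rows are the
   anti-diagonals i + j = s and whose columns are the diagonals i - j = d. Suitably ordered,
   these rows are nested and the r-th one has r or r + 1 cells, the latter for floor(m/2)
   resp. ceil(m/2) of the rows. On such a board, adding a row with a cells gives the rook
   recurrence r'(k+1) = r(k+1) + (a - k) r(k); the sum over i of binom(b, i) S(n - i, n - k)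
   satisfies the same recurrence, by the Stirling recurrence for a row of n cells and by
   Pascal's rule for a row of n + 1 cells. *)

lemma Stirling2_ext_of_nat [simp]: "Stirling2_ext (int n) (int r) = int (Stirling n r)"
  by (simp add: Stirling2_ext_def)

lemma Stirling2_ext_neg_right: "0 \<le> n \<Longrightarrow> r < 0 \<Longrightarrow> Stirling2_ext n r = 0"
  by (cases "n = 0") (auto simp: Stirling2_ext_def)

lemma Stirling2_ext_less: "0 \<le> n \<Longrightarrow> n < r \<Longrightarrow> Stirling2_ext n r = 0"
  by (auto simp: Stirling2_ext_def nat_less_eq_zless intro!: Stirling_less)

lemma Stirling2_ext_same: "0 \<le> n \<Longrightarrow> Stirling2_ext n n = 1"
  by (simp add: Stirling2_ext_def)

lemma Stirling2_ext_rec: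
  assumes "0 \<le> n"
  shows "Stirling2_ext (n + 1) r = r * Stirling2_ext n r + Stirling2_ext n (r - 1)"
proof -
  obtain a where n: "n = int a" using assms nonneg_eq_int by blast
  consider "r < 0" | "r = 0" | b where "r = int (Suc b)"
    by (metis not_less nonneg_int_cases not0_implies_Suc of_nat_0)
  then show ?thesis
  proof cases
    case 1
    then show ?thesis using assms by (simp add: Stirling2_ext_neg_right)
  next
    case 2
    have "Stirling2_ext (int a + 1) 0 = 0"
      using Stirling2_ext_of_nat[of "Suc a" 0] by (simp add: add.commute)
    then show ?thesis using 2 n by (simp add: Stirling2_ext_neg_right)
  next
    case 3
    have "n + 1 = int (Suc a)" "r - 1 = int b" using 3 n by simp_all
    moreover have "int (Stirling (Suc a) (Suc b)) =
        int (Suc b) * int (Stirling a (Suc b)) + int (Stirling a b)"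
      by (simp add: algebra_simps)
    ultimately show ?thesis unfolding 3 n by (simp only: Stirling2_ext_of_nat)
  qed
qed

definition binomial_Stirling_sum :: "nat \<Rightarrow> nat \<Rightarrow> nat \<Rightarrow> int" where
  "binomial_Stirling_sum b n k =
     (\<Sum>i = 0..k. int (b choose i) * Stirling2_ext (int n - int i) (int n - int k))"

lemma binomial_Stirling_sum_0 [simp]: "binomial_Stirling_sum b n 0 = 1"
  by (simp add: binomial_Stirling_sum_def Stirling2_ext_same)

lemma binomial_Stirling_sum_0_0_Suc [simp]: "binomial_Stirling_sum 0 0 (Suc k) = 0"
  unfolding binomial_Stirling_sum_def
proof (intro sum.neutral ballI)
  show "int (0 choose i) * Stirling2_ext (int 0 - int i) (int 0 - int (Suc k)) = 0" for i
    by (cases i) (simp_all add: Stirling2_ext_neg_right)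
qed

(* b \<le> n kills the terms with i > n, so Stirling2_ext_rec is only needed for a
   nonnegative first argument. *)
lemma binomial_Stirling_sum_Suc_Suc:
  assumes "b \<le> n"
  shows "binomial_Stirling_sum b (Suc n) (Suc k) =
    binomial_Stirling_sum b n (Suc k) + (int n - int k) * binomial_Stirling_sum b n k"
proof -
  define t where "t i r = int (b choose i) * Stirling2_ext (int n - int i) r" for i r
  have rec: "int (b choose i) * Stirling2_ext (int (Suc n) - int i) (int n - int k) =
      (int n - int k) * t i (int n - int k) + t i (int n - int (Suc k))" for i
  proof (cases "i \<le> n")
    case True
    then have Stirling_step: "Stirling2_ext (int (Suc n) - int i) (int n - int k) =
        (int n - int k) * Stirling2_ext (int n - int i) (int n - int k) +
        Stirling2_ext (int n - int i) (int n - int (Suc k))"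
      using Stirling2_ext_rec[of "int n - int i" "int n - int k"] by (simp add: algebra_simps)
    show ?thesis by (simp only: t_def Stirling_step) (simp add: algebra_simps)
  next
    case False
    then have "b choose i = 0" using assms by simp
    then show ?thesis unfolding t_def by (simp del: binomial_eq_0_iff)
  qed
  have top: "t (Suc k) (int n - int k) = 0"
    using assms by (cases "Suc k \<le> n") (auto simp: t_def Stirling2_ext_less)
  have "binomial_Stirling_sum b (Suc n) (Suc k) =
      (\<Sum>i = 0..Suc k. (int n - int k) * t i (int n - int k) + t i (int n - int (Suc k)))"
    unfolding binomial_Stirling_sum_def using rec by (intro sum.cong) auto
  also have "\<dots> = (int n - int k) * (\<Sum>i = 0..Suc k. t i (int n - int k)) +
      binomial_Stirling_sum b n (Suc k)"
    by (simp only: sum.distrib sum_distrib_left binomial_Stirling_sum_def t_def)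
  also have "(\<Sum>i = 0..Suc k. t i (int n - int k)) = binomial_Stirling_sum b n k"
    unfolding sum.atLeast0_atMost_Suc top by (simp add: binomial_Stirling_sum_def t_def)
  finally show ?thesis by simp
qed

lemma binomial_Stirling_sum_Suc_Suc_Suc:
  "binomial_Stirling_sum (Suc b) (Suc n) (Suc k) =
    binomial_Stirling_sum b (Suc n) (Suc k) + binomial_Stirling_sum b n k"
  unfolding binomial_Stirling_sum_def sum.atLeast0_atMost_Suc_shift
  by (simp add: sum.distrib algebra_simps)

definition placements :: "('p \<Rightarrow> 'a) \<Rightarrow> ('p \<Rightarrow> 'b) \<Rightarrow> 'p set \<Rightarrow> nat \<Rightarrow> 'p set set" where
  "placements f g U k = {A. A \<subseteq> U \<and> card A = k \<and> inj_on f A \<and> inj_on g A}"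

abbreviation rook_placements :: "('a \<times> 'b) set \<Rightarrow> nat \<Rightarrow> ('a \<times> 'b) set set" where
  "rook_placements \<equiv> placements fst snd"

lemma finite_placements: "finite U \<Longrightarrow> finite (placements f g U k)"
  by (rule finite_subset[of _ "Pow U"]) (auto simp: placements_def)

lemma placements_0: "finite U \<Longrightarrow> placements f g U 0 = {{}}"
  using finite_subset by (fastforce simp: placements_def)

lemma placements_empty_Suc: "placements f g {} (Suc k) = {}"
  by (auto simp: placements_def)

lemma rook_placements_avoiding_row:
  assumes "a \<notin> fst ` B"
  shows "{P \<in> rook_placements (B \<union> {a} \<times> X) k. a \<notin> fst ` P} = rook_placements B k"
  using assms by (force simp: placements_def)

lemma bij_betw_rook_placements_insert_row:
  assumes "finite B" "a \<notin> fst ` B" "snd ` B \<subseteq> X"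
  shows "bij_betw (\<lambda>(P, x). insert (a, x) P) (SIGMA P:rook_placements B k. X - snd ` P)
    {Q \<in> rook_placements (B \<union> {a} \<times> X) (Suc k). a \<in> fst ` Q}"
proof (rule bij_betw_imageI)
  have row_free: "a \<notin> fst ` P" if "P \<in> rook_placements B k" for P
    using that assms(2) by (auto simp: placements_def)
  show "inj_on (\<lambda>(P, x). insert (a, x) P) (SIGMA P:rook_placements B k. X - snd ` P)"
  proof (rule inj_onI, clarsimp)
    fix P Q x y
    assume P: "P \<in> rook_placements B k" and Q: "Q \<in> rook_placements B k"
      and eq: "insert (a, x) P = insert (a, y) Q"
    have "P = {p \<in> insert (a, x) P. fst p \<noteq> a}" "Q = {p \<in> insert (a, y) Q. fst p \<noteq> a}"
      using row_free[OF P] row_free[OF Q] by force+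
    then show "P = Q \<and> x = y"
      using eq row_free[OF P] by (metis fst_conv imageI insert_iff prod.inject)
  qed
  show "(\<lambda>(P, x). insert (a, x) P) ` (SIGMA P:rook_placements B k. X - snd ` P) =
    {Q \<in> rook_placements (B \<union> {a} \<times> X) (Suc k). a \<in> fst ` Q}"
  proof (intro equalityI subsetI)
    fix Q
    assume "Q \<in> (\<lambda>(P, x). insert (a, x) P) ` (SIGMA P:rook_placements B k. X - snd ` P)"
    then obtain P x where P: "P \<in> rook_placements B k" and x: "x \<in> X" "x \<notin> snd ` P"
      and Q: "Q = insert (a, x) P" by auto
    have "finite P" using P assms(1) by (auto simp: placements_def intro: finite_subset)
    moreover have "(a, x) \<notin> P" using row_free[OF P] by (metis fst_conv imageI)
    ultimately show "Q \<in> {Q \<in> rook_placements (B \<union> {a} \<times> X) (Suc k). a \<in> fst ` Q}"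
      using P x row_free[OF P] unfolding Q by (auto simp: placements_def)
  next
    fix Q
    assume "Q \<in> {Q \<in> rook_placements (B \<union> {a} \<times> X) (Suc k). a \<in> fst ` Q}"
    then obtain x where Q: "Q \<in> rook_placements (B \<union> {a} \<times> X) (Suc k)" and ax: "(a, x) \<in> Q"
      by force
    define P where "P = Q - {(a, x)}"
    have Q_props: "Q \<subseteq> B \<union> {a} \<times> X" "card Q = Suc k" "inj_on fst Q" "inj_on snd Q"
      using Q by (simp_all add: placements_def)
    have "P \<subseteq> B"
    proof
      fix p assume "p \<in> P"
      then have "p \<in> Q" "fst p \<noteq> a" using Q_props(3) ax by (auto simp: P_def inj_on_def)
      then show "p \<in> B" using Q_props(1) by auto
    qed
    moreover have "card P = k"
      using Q_props(2) ax by (simp add: P_def)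
    moreover have "inj_on fst P" "inj_on snd P"
      using Q_props(3,4) by (auto simp: P_def intro: inj_on_subset)
    ultimately have "P \<in> rook_placements B k" by (simp add: placements_def)
    moreover have "x \<in> X - snd ` P"
      using Q_props(1,4) ax assms(2) by (force simp: P_def inj_on_def)
    moreover have "Q = insert (a, x) P" using ax by (auto simp: P_def)
    ultimately show "Q \<in> (\<lambda>(P, x). insert (a, x) P) ` (SIGMA P:rook_placements B k. X - snd ` P)"
      by blast
  qed
qed

lemma card_rook_placements_add_row:
  assumes "finite B" "finite X" "a \<notin> fst ` B" "snd ` B \<subseteq> X"
  shows "int (card (rook_placements (B \<union> {a} \<times> X) (Suc k))) =
    int (card (rook_placements B (Suc k))) + (int (card X) - int k) * int (card (rook_placements B k))"
proof -
  let ?R = "rook_placements (B \<union> {a} \<times> X) (Suc k)"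
  have fin: "finite (rook_placements B k)" "finite ?R"
    using assms(1,2) by (simp_all add: finite_placements)
  have free: "int (card (X - snd ` P)) = int (card X) - int k" if "P \<in> rook_placements B k" for P
  proof -
    have sub: "snd ` P \<subseteq> X" and card: "card (snd ` P) = k"
      using that assms(4) by (auto simp: placements_def card_image)
    then have "k \<le> card X" using assms(2) card_mono by blast
    then show ?thesis
      using sub card assms(2) by (simp add: card_Diff_subset finite_subset of_nat_diff)
  qed
  have "card {Q \<in> ?R. a \<in> fst ` Q} = card (SIGMA P:rook_placements B k. X - snd ` P)"
    using bij_betw_same_card[OF bij_betw_rook_placements_insert_row[OF assms(1,3,4)]] by simp
  also have "\<dots> = (\<Sum>P\<in>rook_placements B k. card (X - snd ` P))"
    using fin assms(2) by simp
  finally have "int (card {Q \<in> ?R. a \<in> fst ` Q}) =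
      (int (card X) - int k) * int (card (rook_placements B k))"
    using free by (simp add: of_nat_sum)
  moreover have "card ?R = card {Q \<in> ?R. a \<notin> fst ` Q} + card {Q \<in> ?R. a \<in> fst ` Q}"
    using fin(2) by (subst card_Un_disjoint[symmetric]) (auto intro: arg_cong[where f = card])
  ultimately show ?thesis
    using rook_placements_avoiding_row[OF assms(3)] by simp
qed

lemma card_less_Suc_Collect:
  "card {i. i < Suc n \<and> P i} = card {i. i < n \<and> P i} + (if P n then 1 else 0)"
proof -
  have "{i. i < Suc n \<and> P i} = (if P n then insert n {i. i < n \<and> P i} else {i. i < n \<and> P i})"
    by (auto simp: less_Suc_eq)
  then show ?thesis by simp
qed

theorem card_rook_placements_nested_rows:
  fixes R :: "nat \<Rightarrow> 'a set"
  assumes fin: "\<And>i. finite (R i)" and "mono R"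
    and rows: "\<And>i. card (R i) = i \<or> card (R i) = Suc i"
  shows "int (card (rook_placements (SIGMA i:{..<n}. R i) k)) =
    binomial_Stirling_sum (card {i. i < n \<and> card (R i) = Suc i}) n k"
proof (induction n arbitrary: k)
  case 0
  then show ?case
    by (cases k) (simp_all add: placements_0 placements_empty_Suc)
next
  case (Suc n)
  note IH = Suc.IH
  let ?B = "SIGMA i:{..<n}. R i"
  let ?b = "card {i. i < n \<and> card (R i) = Suc i}"
  have fin_B: "finite ?B" using fin by simp
  show ?case
  proof (cases k)
    case 0
    then show ?thesis using fin by (simp add: placements_0)
  next
    case (Suc j)
    have board: "(SIGMA i:{..<Suc n}. R i) = ?B \<union> {n} \<times> R n"
      by (auto simp: less_Suc_eq)
    have "snd ` ?B \<subseteq> R n"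
    proof
      fix y assume "y \<in> snd ` ?B"
      then obtain i where "i < n" "y \<in> R i" by auto
      then show "y \<in> R n" using monoD[OF \<open>mono R\<close>, of i n] by auto
    qed
    then have rec: "int (card (rook_placements (SIGMA i:{..<Suc n}. R i) (Suc j))) =
        binomial_Stirling_sum ?b n (Suc j) + (int (card (R n)) - int j) * binomial_Stirling_sum ?b n j"
      unfolding board IH[symmetric] using fin_B fin
      by (intro card_rook_placements_add_row) auto
    have "?b \<le> n"
      using card_mono[of "{..<n}" "{i. i < n \<and> card (R i) = Suc i}"] by auto
    then show ?thesis
      using rows[of n] unfolding rec \<open>k = Suc j\<close>
      by (auto simp: card_less_Suc_Collect binomial_Stirling_sum_Suc_Suc
          binomial_Stirling_sum_Suc_Suc_Suc algebra_simps)
  qed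
qed

lemma card_placements_image:
  assumes "inj_on h U" "inj_on \<phi> (f ` U)" "inj_on \<psi> (g ` U)"
    and "\<And>p. p \<in> U \<Longrightarrow> f' (h p) = \<phi> (f p)" "\<And>p. p \<in> U \<Longrightarrow> g' (h p) = \<psi> (g p)"
  shows "card (placements f' g' (h ` U) k) = card (placements f g U k)"
proof -
  have inj_iff: "inj_on f' (h ` A) \<longleftrightarrow> inj_on f A" "inj_on g' (h ` A) \<longleftrightarrow> inj_on g A"
    if "A \<subseteq> U" for A
  proof -
    have h: "inj_on h A" using assms(1) that by (rule inj_on_subset)
    have "inj_on f' (h ` A) \<longleftrightarrow> inj_on (\<phi> \<circ> f) A"
      unfolding comp_inj_on_iff[OF h] using assms(4) that by (intro inj_on_cong) auto
    also have "\<dots> \<longleftrightarrow> inj_on f A"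
      using inj_on_subset[OF assms(2) image_mono[OF that]] by (metis comp_inj_on inj_on_imageI2)
    finally show "inj_on f' (h ` A) \<longleftrightarrow> inj_on f A" .
    have "inj_on g' (h ` A) \<longleftrightarrow> inj_on (\<psi> \<circ> g) A"
      unfolding comp_inj_on_iff[OF h] using assms(5) that by (intro inj_on_cong) auto
    also have "\<dots> \<longleftrightarrow> inj_on g A"
      using inj_on_subset[OF assms(3) image_mono[OF that]] by (metis comp_inj_on inj_on_imageI2)
    finally show "inj_on g' (h ` A) \<longleftrightarrow> inj_on g A" .
  qed
  have "placements f' g' (h ` U) k = image h ` placements f g U k"
  proof (intro equalityI subsetI)
    fix B assume B: "B \<in> placements f' g' (h ` U) k"
    then obtain A where "A \<subseteq> U" "B = h ` A" by (auto simp: placements_def subset_image_iff)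
    then show "B \<in> image h ` placements f g U k"
      using B inj_iff card_image[OF inj_on_subset[OF assms(1)]]
      by (auto simp: placements_def)
  qed (use inj_iff card_image[OF inj_on_subset[OF assms(1)]] in \<open>auto simp: placements_def\<close>)
  moreover have "inj_on (image h) (placements f g U k)"
    using inj_on_image_Pow[OF assms(1)] by (rule inj_on_subset) (auto simp: placements_def)
  ultimately show ?thesis by (simp add: card_image)
qed

lemma card_placements_Un:
  assumes "finite U" "finite V" "f ` U \<inter> f ` V = {}" "g ` U \<inter> g ` V = {}"
  shows "card (placements f g (U \<union> V) k) =
    (\<Sum>j = 0..k. card (placements f g U j) * card (placements f g V (k - j)))"
proof -
  have disj: "U \<inter> V = {}" using assms(3) by auto
  let ?S = "SIGMA j:{0..k}. placements f g U j \<times> placements f g V (k - j)"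
  have "bij_betw (\<lambda>(j, A, B). A \<union> B) ?S (placements f g (U \<union> V) k)"
  proof (rule bij_betw_byWitness[where f' = "\<lambda>X. (card (X \<inter> U), X \<inter> U, X \<inter> V)"])
    show "\<forall>x\<in>?S. (\<lambda>X. (card (X \<inter> U), X \<inter> U, X \<inter> V)) ((\<lambda>(j, A, B). A \<union> B) x) = x"
    proof clarsimp
      fix j A B assume "A \<in> placements f g U j" "B \<in> placements f g V (k - j)"
      then have "A \<subseteq> U" "B \<subseteq> V" "card A = j" by (simp_all add: placements_def)
      moreover have "(A \<union> B) \<inter> U = A" "(A \<union> B) \<inter> V = B"
        using calculation(1,2) disj by blast+
      ultimately show "card ((A \<union> B) \<inter> U) = j \<and> (A \<union> B) \<inter> U = A \<and> (A \<union> B) \<inter> V = B"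
        by simp
    qed
    show "\<forall>X\<in>placements f g (U \<union> V) k. (\<lambda>(j, A, B). A \<union> B) (card (X \<inter> U), X \<inter> U, X \<inter> V) = X"
      by (auto simp: placements_def)
    show "(\<lambda>(j, A, B). A \<union> B) ` ?S \<subseteq> placements f g (U \<union> V) k"
    proof clarsimp
      fix j A B assume "j \<le> k" "A \<in> placements f g U j" "B \<in> placements f g V (k - j)"
      then have "A \<subseteq> U" "B \<subseteq> V" "card A + card B = k"
        "inj_on f A" "inj_on g A" "inj_on f B" "inj_on g B"
        by (simp_all add: placements_def)
      moreover from this have "finite A" "finite B" "A \<inter> B = {}"
        "f ` A \<inter> f ` B = {}" "g ` A \<inter> g ` B = {}"
        using assms finite_subset disj by blast+
      ultimately show "A \<union> B \<in> placements f g (U \<union> V) k"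
        by (auto simp: placements_def card_Un_disjoint inj_on_Un)
    qed
    show "(\<lambda>X. (card (X \<inter> U), X \<inter> U, X \<inter> V)) ` placements f g (U \<union> V) k \<subseteq> ?S"
    proof clarsimp
      fix X assume X: "X \<in> placements f g (U \<union> V) k"
      then have "X = (X \<inter> U) \<union> (X \<inter> V)" "finite (X \<inter> U)" "finite (X \<inter> V)"
        and "card X = k"
        using assms(1,2) by (auto simp: placements_def)
      moreover have "X \<inter> U \<inter> (X \<inter> V) = {}" using disj by blast
      ultimately have "card (X \<inter> U) + card (X \<inter> V) = k"
        by (metis card_Un_disjoint)
      then show "card (X \<inter> U) \<le> k \<and> X \<inter> U \<in> placements f g U (card (X \<inter> U)) \<and>
          X \<inter> V \<in> placements f g V (k - card (X \<inter> U))"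
        using X by (auto simp: placements_def intro: inj_on_subset)
    qed
  qed
  then have "card (placements f g (U \<union> V) k) = card ?S"
    by (simp add: bij_betw_same_card)
  also have "\<dots> = (\<Sum>j = 0..k. card (placements f g U j) * card (placements f g V (k - j)))"
    using assms(1,2) by (simp add: finite_placements card_cartesian_product)
  finally show ?thesis .
qed

definition diag_sum :: "int \<times> int \<Rightarrow> int" where
  "diag_sum p = fst p + snd p"

definition diag_diff :: "int \<times> int \<Rightarrow> int" where
  "diag_diff p = fst p - snd p"

lemma B_S_eq_card_placements: "B_S m k = card (placements diag_sum diag_diff (board_S m) k)"
proof -
  have "nonattacking_bishops A \<longleftrightarrow> inj_on diag_sum A \<and> inj_on diag_diff A" for A
    unfolding nonattacking_bishops_def inj_on_def diag_sum_def diag_diff_def by blast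
  then show ?thesis unfolding B_S_def placements_def by simp
qed

definition board_colour :: "bool \<Rightarrow> nat \<Rightarrow> (int \<times> int) set" where
  "board_colour ev m = {p \<in> board_S m. even (diag_sum p) = ev}"

definition parity_row :: "bool \<Rightarrow> nat \<Rightarrow> int set" where
  "parity_row ev r = {d. \<bar>d\<bar> \<le> int r \<and> even d = ev}"

(* Row r of the rotated board is the anti-diagonal i + j = diag_of_row ev m r of colour ev.
   The short anti-diagonals s = r + 2 (with r + 1 cells) and the long ones s = 2m + 1 - r
   (with r cells) interleave, which makes the rows nested. *)
definition diag_of_row :: "bool \<Rightarrow> nat \<Rightarrow> nat \<Rightarrow> int" where
  "diag_of_row ev m r = (if even r = ev then int r + 2 else 2 * int m + 1 - int r)"

definition bishop_square :: "bool \<Rightarrow> nat \<Rightarrow> nat \<times> int \<Rightarrow> int \<times> int" where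
  "bishop_square ev m p =
     ((diag_of_row ev m (fst p) + snd p) div 2, (diag_of_row ev m (fst p) - snd p) div 2)"

lemma even_diag_of_row: "even (diag_of_row ev m r) = ev"
  by (auto simp: diag_of_row_def)

lemma inj_on_diag_of_row: "inj_on (diag_of_row ev m) {..<m}"
  by (auto simp: inj_on_def diag_of_row_def split: if_splits)

lemma
  assumes "even d = ev"
  shows diag_sum_bishop_square: "diag_sum (bishop_square ev m (r, d)) = diag_of_row ev m r"
    and diag_diff_bishop_square: "diag_diff (bishop_square ev m (r, d)) = d"
proof -
  let ?s = "diag_of_row ev m r"
  have "even (?s + d)" "even (?s - d)"
    using assms even_diag_of_row[of ev m r] by auto
  then obtain a b where "?s + d = 2 * a" "?s - d = 2 * b" by (meson evenE)
  then show "diag_sum (bishop_square ev m (r, d)) = ?s"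
    and "diag_diff (bishop_square ev m (r, d)) = d"
    by (auto simp: bishop_square_def diag_sum_def diag_diff_def)
qed

lemma finite_parity_row: "finite (parity_row ev r)"
  by (rule finite_subset[of _ "{-int r..int r}"]) (auto simp: parity_row_def)

lemma card_parity_row: "card (parity_row ev r) = (if even r = ev then Suc r else r)"
proof (induction r)
  case 0
  have "parity_row ev 0 = (if ev then {0} else {})" by (auto simp: parity_row_def)
  then show ?case by simp
next
  case (Suc r)
  have "parity_row ev (Suc r) =
      parity_row ev r \<union> (if even (Suc r) = ev then {int (Suc r), - int (Suc r)} else {})"
    by (auto simp: parity_row_def abs_le_iff; presburger)
  moreover have "parity_row ev r \<inter> {int (Suc r), - int (Suc r)} = {}"
    by (auto simp: parity_row_def)
  ultimately show ?case
    using Suc finite_parity_row[of ev r] by (auto simp: card_Un_disjoint)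
qed

lemma mono_parity_row: "mono (parity_row ev)"
  by (auto simp: mono_def parity_row_def)

lemma mem_board_S_if_diag_of_row:
  assumes "r < m" "\<bar>x - y\<bar> \<le> int r" "x + y = diag_of_row ev m r"
  shows "(x, y) \<in> board_S m"
  using assms unfolding board_S_def diag_of_row_def by (auto split: if_splits)

lemma obtain_row_of_diag:
  assumes "(x, y) \<in> board_S m"
  obtains r where "r < m" "\<bar>x - y\<bar> \<le> int r" "x + y = diag_of_row (even (x + y)) m r"
proof (cases "x + y - 2 < int m")
  case True
  show ?thesis
  proof
    show "nat (x + y - 2) < m" "\<bar>x - y\<bar> \<le> int (nat (x + y - 2))"
      using True assms by (auto simp: board_S_def)
    show "x + y = diag_of_row (even (x + y)) m (nat (x + y - 2))"
      using assms by (auto simp: board_S_def diag_of_row_def even_nat_iff)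
  qed
next
  case False
  show ?thesis
  proof
    show "nat (2 * int m + 1 - (x + y)) < m" "\<bar>x - y\<bar> \<le> int (nat (2 * int m + 1 - (x + y)))"
      using False assms by (auto simp: board_S_def)
    show "x + y = diag_of_row (even (x + y)) m (nat (2 * int m + 1 - (x + y)))"
      using assms by (auto simp: board_S_def diag_of_row_def even_nat_iff)
  qed
qed

lemma bishop_square_image:
  "bishop_square ev m ` (SIGMA r:{..<m}. parity_row ev r) = board_colour ev m"
proof (intro equalityI subsetI)
  fix p assume "p \<in> bishop_square ev m ` (SIGMA r:{..<m}. parity_row ev r)"
  then obtain r d where rd: "r < m" "\<bar>d\<bar> \<le> int r" "even d = ev"
    and p: "p = bishop_square ev m (r, d)"
    by (auto simp: parity_row_def)
  have sum: "diag_sum p = diag_of_row ev m r" and "diag_diff p = d"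
    using rd(3) unfolding p by (simp_all add: diag_sum_bishop_square diag_diff_bishop_square)
  then have "p \<in> board_S m"
    using mem_board_S_if_diag_of_row[OF rd(1), of "fst p" "snd p" ev] rd(2)
    by (simp add: diag_sum_def diag_diff_def)
  then show "p \<in> board_colour ev m"
    using sum even_diag_of_row[of ev m r] by (simp add: board_colour_def)
next
  fix p assume p: "p \<in> board_colour ev m"
  obtain x y where xy: "p = (x, y)" by (cases p)
  then have board: "(x, y) \<in> board_S m" and ev: "even (x + y) = ev"
    using p by (auto simp: board_colour_def diag_sum_def)
  obtain r where r: "r < m" "\<bar>x - y\<bar> \<le> int r" "x + y = diag_of_row ev m r"
    using obtain_row_of_diag[OF board] ev by blast
  have "(r, x - y) \<in> (SIGMA r:{..<m}. parity_row ev r)"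
    using r(1,2) ev by (simp add: parity_row_def)
  moreover have "p = bishop_square ev m (r, x - y)"
    unfolding xy bishop_square_def by (simp flip: r(3))
  ultimately show "p \<in> bishop_square ev m ` (SIGMA r:{..<m}. parity_row ev r)"
    by (rule rev_image_eqI)
qed

lemma card_rook_placements_parity_rows:
  "int (card (rook_placements (SIGMA r:{..<m}. parity_row ev r) k)) =
    binomial_Stirling_sum (card {i. i < m \<and> even i = ev}) m k"
proof -
  have "{i. i < m \<and> card (parity_row ev i) = Suc i} = {i. i < m \<and> even i = ev}"
    by (auto simp: card_parity_row)
  then show ?thesis
    using card_rook_placements_nested_rows[OF finite_parity_row mono_parity_row, of ev]
    by (simp add: card_parity_row)
qed

lemma card_placements_board_colour_eq_rook:
  "card (placements diag_sum diag_diff (board_colour ev m) k) =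
    card (rook_placements (SIGMA r:{..<m}. parity_row ev r) k)"
  unfolding bishop_square_image[symmetric]
proof (rule card_placements_image)
  let ?U = "SIGMA r:{..<m}. parity_row ev r"
  show sum: "diag_sum (bishop_square ev m p) = diag_of_row ev m (fst p)"
    and diff: "diag_diff (bishop_square ev m p) = id (snd p)" if "p \<in> ?U" for p
    using that by (auto simp: parity_row_def diag_sum_bishop_square diag_diff_bishop_square)
  show "inj_on (diag_of_row ev m) (fst ` ?U)"
    using inj_on_diag_of_row by (rule inj_on_subset) auto
  show "inj_on (bishop_square ev m) ?U"
  proof (rule inj_onI)
    fix p q assume "p \<in> ?U" "q \<in> ?U" "bishop_square ev m p = bishop_square ev m q"
    then have "diag_of_row ev m (fst p) = diag_of_row ev m (fst q)" "snd p = snd q"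
      using sum diff by (metis id_apply)+
    then show "p = q" using inj_onD[OF inj_on_diag_of_row] \<open>p \<in> ?U\<close> \<open>q \<in> ?U\<close>
      by (auto simp: prod_eq_iff)
  qed
  show "inj_on id (snd ` ?U)" by simp
qed

lemma card_even_less: "card {i. i < m \<and> even i} = (m + 1) div 2"
  by (induction m) (auto simp: card_less_Suc_Collect elim: oddE)

lemma card_odd_less: "card {i. i < m \<and> odd i} = m div 2"
  by (induction m) (auto simp: card_less_Suc_Collect elim: oddE)

theorem B_S_eq_sum_binomial_Stirling_sum:
  "int (B_S m k) =
    (\<Sum>j = 0..k.
       binomial_Stirling_sum (m div 2) m j * binomial_Stirling_sum ((m + 1) div 2) m (k - j))"
proof -
  have board: "board_S m = board_colour False m \<union> board_colour True m"
    by (auto simp: board_colour_def)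
  have fin: "finite (board_colour ev m)" for ev
    by (rule finite_subset[of _ "board_S m"]) (auto simp: board_colour_def board_S_def)
  have "even (diag_diff p) = even (diag_sum p)" for p
    by (simp add: diag_sum_def diag_diff_def)
  then have "diag_sum ` board_colour False m \<inter> diag_sum ` board_colour True m = {}"
    "diag_diff ` board_colour False m \<inter> diag_diff ` board_colour True m = {}"
    by (auto simp: board_colour_def dest: arg_cong[where f = even])
  then have "B_S m k =
      (\<Sum>j = 0..k. card (placements diag_sum diag_diff (board_colour False m) j) *
        card (placements diag_sum diag_diff (board_colour True m) (k - j)))"
    unfolding B_S_eq_card_placements board by (rule card_placements_Un[OF fin fin])
  then show ?thesis
    by (simp add: card_placements_board_colour_eq_rook card_rook_placements_parity_rows
        card_even_less card_odd_less)
qed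

theorem theorem2p3:
  fixes m k :: nat
  shows "int (B_S m k) =
    (\<Sum>j = 0..k. \<Sum>i = 0..j.
       int ((m div 2) choose i) * Stirling2_ext (int m - int i) (int m - int j) *
       (\<Sum>l = 0..k - j. int (((m + 1) div 2) choose l) *
          Stirling2_ext (int m - int l) (int m - int k + int j)))"
  unfolding B_S_eq_sum_binomial_Stirling_sum
proof (rule sum.cong[OF refl])
  fix j assume "j \<in> {0..k}"
  then have "int m - int (k - j) = int m - int k + int j" by auto
  then show "binomial_Stirling_sum (m div 2) m j * binomial_Stirling_sum ((m + 1) div 2) m (k - j) =
    (\<Sum>i = 0..j. int ((m div 2) choose i) * Stirling2_ext (int m - int i) (int m - int j) *
       (\<Sum>l = 0..k - j. int (((m + 1) div 2) choose l) *
          Stirling2_ext (int m - int l) (int m - int k + int j)))"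
    by (simp only: binomial_Stirling_sum_def sum_distrib_right)
qed

end
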